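(* For $n\ge0$ let $Q_n^L(x)=\sum_{r=0}^{n}\left[\binom{n}{r}\sum_{\ell=0}^{r}\binom{r}{\ell}\frac{1}{\ell!}\right](-x)^r$ (the coefficient polynomials of the linear transformation $x^n\mapsto L_n(x)$). Then for all $n\ge0$, $$(n+1)Q^L_{n+1}(x)=(x-2x^2+x^3)(Q^L_n)'(x)+(n+1-2x-nx^2)Q^L_n(x).$$
   Context: $L_n(x)=\sum_{k=0}^n\binom{n}{k}\frac{(-x)^k}{k!}$ is the $n$th Laguerre polynomial; coefficient polynomials $Q_k$ of a linear operator $T$ on $\mathbb{C}[x]$ are defined by the unique representation $T=\sum_k\frac{Q_k(x)}{k!}D^k$, $D=d/dx$. *)

theory Defs
  imports "HOL-Computational_Algebra.Polynomial"
begin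

definition QL :: "nat \<Rightarrow> complex poly" where
  "QL n = (\<Sum>r\<le>n. monom (of_nat (n choose r) *
              (\<Sum>l\<le>r. of_nat (r choose l) / of_nat (fact l)) * (-1) ^ r) r)"

end

theory Submission
  imports Defs
begin

text \<open>
  The coefficient of \<open>x^k\<close> in \<open>Q^L_n\<close> is \<open>(-1)^k C(n,k) s_k\<close>, where \<open>s_k = L_k(-1)\<close>.
  For \<open>k \<ge> 2\<close> the coefficients of \<open>x^k\<close> give a linear relation between \<open>C(n+1,k) s_k\<close> and
  the \<open>C(n,k-i) s_(k-i)\<close>, \<open>i = 0,1,2\<close>; by Pascal's rule and the absorption identity
  \<open>(a-k) C(a,k) = (k+1) C(a,k+1)\<close> it is \<open>C(n,k-1)\<close> times the Laguerre recurrence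
  \<open>k s_k = 2k s_(k-1) - (k-1) s_(k-2)\<close>. That recurrence follows from
  \<open>s_(r+1) - s_r = \<Sum>_j C(r,j)/(j+1)!\<close>. The coefficients of \<open>x^0\<close> and \<open>x^1\<close> are checked directly.
\<close>

definition laguerre_neg1 :: "nat \<Rightarrow> 'a::field_char_0" where
  "laguerre_neg1 r = (\<Sum>l\<le>r. of_nat (r choose l) / fact l)"

lemma laguerre_neg1_Suc_diff:
  "laguerre_neg1 (Suc r) - laguerre_neg1 r =
     (\<Sum>j\<le>r. of_nat (r choose j) / fact (Suc j) :: 'a::field_char_0)"
proof -
  have "laguerre_neg1 r = (\<Sum>l\<le>Suc r. of_nat (r choose l) / (fact l :: 'a))"
    by (simp add: laguerre_neg1_def)
  then show ?thesis
    by (simp add: laguerre_neg1_def sum.atMost_Suc_shift diff_divide_distrib[symmetric]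
        sum_subtractf[symmetric] del: sum.atMost_Suc)
qed

lemma laguerre_neg1_rec:
  "of_nat (Suc (Suc k)) * laguerre_neg1 (Suc (Suc k)) =
     2 * of_nat (Suc (Suc k)) * laguerre_neg1 (Suc k) - of_nat (Suc k) * (laguerre_neg1 k :: 'a::field_char_0)"
proof -
  define s :: "nat \<Rightarrow> 'a" where "s = laguerre_neg1"
  have summand: "of_nat (Suc (Suc k)) * (of_nat (Suc k choose j) / fact (Suc j))
      - of_nat (Suc k) * (of_nat (k choose j) / fact (Suc j)) = of_nat (Suc k choose j) / (fact j :: 'a)"
    for j
  proof -
    have absorb: "(of_nat (Suc k) - of_nat j) * of_nat (Suc k choose j) =
        of_nat (Suc k) * (of_nat (k choose j) :: 'a)"
      using gbinomial_absorb_comp[of "of_nat (Suc k) :: 'a" j] by (simp add: binomial_gbinomial)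
    have "of_nat (Suc (Suc k)) * of_nat (Suc k choose j) - of_nat (Suc k) * of_nat (k choose j)
        = (of_nat (Suc (Suc k)) - (of_nat (Suc k) - of_nat j)) * (of_nat (Suc k choose j) :: 'a)"
      by (simp only: absorb[symmetric] left_diff_distrib[of "of_nat (Suc (Suc k))"])
    also have "\<dots> = of_nat (Suc j) * of_nat (Suc k choose j)"
      by simp
    finally show ?thesis
      by (simp add: diff_divide_distrib[symmetric] del: of_nat_Suc)
  qed
  have diff_k: "s (Suc k) - s k = (\<Sum>j\<le>Suc k. of_nat (k choose j) / fact (Suc j))"
    by (simp add: s_def laguerre_neg1_Suc_diff)
  have "of_nat (Suc (Suc k)) * (s (Suc (Suc k)) - s (Suc k)) - of_nat (Suc k) * (s (Suc k) - s k)
      = (\<Sum>j\<le>Suc k. of_nat (Suc (Suc k)) * (of_nat (Suc k choose j) / fact (Suc j))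
          - of_nat (Suc k) * (of_nat (k choose j) / fact (Suc j)))"
    unfolding diff_k unfolding s_def laguerre_neg1_Suc_diff sum_distrib_left sum_subtractf ..
  also have "\<dots> = s (Suc k)"
    by (simp only: summand s_def laguerre_neg1_def)
  finally show ?thesis
    unfolding s_def[symmetric] by (simp add: algebra_simps)
qed

lemma gbinomial_laguerre_neg1_identity:
  fixes a :: "'a::field_char_0"
  shows "(a + 1) * ((a + 1) gchoose Suc (Suc k)) * laguerre_neg1 (Suc (Suc k)) =
    (a + of_nat k + 3) * (a gchoose Suc (Suc k)) * laguerre_neg1 (Suc (Suc k))
    + 2 * of_nat (Suc (Suc k)) * (a gchoose Suc k) * laguerre_neg1 (Suc k)
    + (of_nat k - a) * (a gchoose k) * laguerre_neg1 k"
proof -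
  define s :: "nat \<Rightarrow> 'a" where "s = laguerre_neg1"
  have absorb_k: "(a - of_nat k) * (a gchoose k) - of_nat (Suc k) * (a gchoose Suc k) = 0"
    using gbinomial_mult_1[of a k] by (simp add: algebra_simps)
  have absorb_Suc_k:
    "(a - of_nat (Suc k)) * (a gchoose Suc k) - of_nat (Suc (Suc k)) * (a gchoose Suc (Suc k)) = 0"
    using gbinomial_mult_1[of a "Suc k"] by (simp add: algebra_simps)
  have rec: "of_nat (Suc (Suc k)) * s (Suc (Suc k)) - 2 * of_nat (Suc (Suc k)) * s (Suc k)
      + of_nat (Suc k) * s k = 0"
    unfolding s_def laguerre_neg1_rec by simp
  have "(a + 1) * ((a + 1) gchoose Suc (Suc k)) * s (Suc (Suc k)) -
    ((a + of_nat k + 3) * (a gchoose Suc (Suc k)) * s (Suc (Suc k))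
    + 2 * of_nat (Suc (Suc k)) * (a gchoose Suc k) * s (Suc k)
    + (of_nat k - a) * (a gchoose k) * s k) =
    s k * ((a - of_nat k) * (a gchoose k) - of_nat (Suc k) * (a gchoose Suc k))
    + s (Suc (Suc k)) * ((a - of_nat (Suc k)) * (a gchoose Suc k)
        - of_nat (Suc (Suc k)) * (a gchoose Suc (Suc k)))
    + (a gchoose Suc k) * (of_nat (Suc (Suc k)) * s (Suc (Suc k))
        - 2 * of_nat (Suc (Suc k)) * s (Suc k) + of_nat (Suc k) * s k)"
    unfolding gbinomial_Suc_Suc by (simp add: algebra_simps)
  then show ?thesis
    unfolding absorb_k absorb_Suc_k rec by (simp add: s_def)
qed

lemma coeff_QL: "coeff (QL n) k = of_nat (n choose k) * laguerre_neg1 k * (-1) ^ k"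
proof -
  have "coeff (QL n) k =
      (\<Sum>r\<le>n. if r = k then of_nat (n choose r) * laguerre_neg1 r * (-1) ^ r else 0)"
    unfolding QL_def coeff_sum laguerre_neg1_def by (intro sum.cong) auto
  also have "\<dots> = of_nat (n choose k) * laguerre_neg1 k * (-1) ^ k"
    by (cases "k \<le> n") (auto simp: sum.delta)
  finally show ?thesis .
qed

lemma coeff_QL_Suc_Suc_recurrence:
  "of_nat (Suc n) * coeff (QL (Suc n)) (Suc (Suc k)) =
    (of_nat n + of_nat k + 3) * coeff (QL n) (Suc (Suc k))
    - 2 * of_nat (Suc (Suc k)) * coeff (QL n) (Suc k) + (of_nat k - of_nat n) * coeff (QL n) k"
proof -
  have "of_nat n + 1 = (of_nat (Suc n) :: complex)"
    by simp
  note identity = gbinomial_laguerre_neg1_identity[of "of_nat n :: complex" k,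
      unfolded this binomial_gbinomial[symmetric]]
  show ?thesis
    unfolding coeff_QL power_Suc mult_minus1 mult_minus_right mult.assoc[symmetric] identity
    by (simp add: algebra_simps)
qed

lemma coeff_recurrence_operator_Suc_Suc:
  fixes p :: "'a::idom poly"
  shows "coeff ([:0, 1, -2, 1:] * pderiv p + [:a, -2, -b:] * p) (Suc (Suc k)) =
    (of_nat k + 2 + a) * coeff p (Suc (Suc k)) - 2 * of_nat (Suc (Suc k)) * coeff p (Suc k)
    + (of_nat k - b) * coeff p k"
  by (cases k) (simp_all add: coeff_pCons coeff_pderiv algebra_simps)

theorem lemma5p2:
  fixes n :: nat
  shows "smult (of_nat (n + 1)) (QL (n + 1)) =
           [:0, 1, -2, 1:] * pderiv (QL n) + [:of_nat n + 1, -2, - of_nat n:] * QL n"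
proof (rule poly_eqI)
  fix k
  consider "k = 0" | "k = 1" | j where "k = Suc (Suc j)"
    by (metis One_nat_def not0_implies_Suc)
  then show "coeff (smult (of_nat (n + 1)) (QL (n + 1))) k =
      coeff ([:0, 1, -2, 1:] * pderiv (QL n) + [:of_nat n + 1, -2, - of_nat n:] * QL n) k"
  proof cases
    case 1
    then show ?thesis
      by (simp add: coeff_QL coeff_pderiv laguerre_neg1_def)
  next
    case 2
    then show ?thesis
      by (simp add: coeff_QL coeff_pderiv laguerre_neg1_def algebra_simps)
  next
    case 3
    show ?thesis
      unfolding 3 coeff_smult coeff_recurrence_operator_Suc_Suc Suc_eq_plus1[symmetric]
        coeff_QL_Suc_Suc_recurrence
      by (simp add: algebra_simps)
  qed
qed

end
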